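(* Let $\alpha(x)=a_1x^2+a_2x+a_3$ and $\beta(x)=b_1x^2+b_2x+b_3$ with $a_i,b_i\in\mathbb{R}$, $x\in\mathbb{R}$. Then the set $$V:=\{(\alpha(x),\beta(x)) : x\in\mathbb{R}\}+\mathbb{R}^2_+$$ is convex. *)

theory Defs
  imports "HOL-Analysis.Analysis"
begin

end

theory Submission
  imports Defs "HOL-Real_Asymp.Real_Asymp"
begin

(* V is convex as soon as for all x, y and t in [0,1] some z has alpha z <= A and beta z <= B,
   where A and B are the t-convex combinations of the values at x and y.  If both leading coefficients
   are nonnegative, z = (1-t) x + t y works.  If a1 > 0 > b1, then a1 beta - b1 alpha is affine:
   starting from (1-t) x + t y, where alpha <= A, walk in the direction in which this affine
   function does not increase until alpha reaches A.  If b1 < 0 and a1 <= 0, start at whichever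
   of x, y satisfies alpha <= A and walk in a direction in which alpha does not increase until the
   strictly concave beta drops below B.  Walking left reduces to walking right under x |-> -x,
   and the case b1 > a1 is symmetric. *)

lemma convex_combination_ge_endpoint:
  fixes u v t :: real
  assumes "0 \<le> t" and "t \<le> 1"
  shows "u \<le> (1 - t) * u + t * v \<or> v \<le> (1 - t) * u + t * v"
proof (cases "u \<le> v")
  case True
  then have "0 \<le> t * (v - u)"
    using assms by simp
  then show ?thesis
    by (simp add: algebra_simps)
next
  case False
  then have "0 \<le> (1 - t) * (u - v)"
    using assms by simp
  then show ?thesis
    by (simp add: algebra_simps)
qed

lemma convex_image_plus_orthant:
  fixes f g :: "'a \<Rightarrow> real"
  assumes "\<And>x y t. 0 \<le> t \<Longrightarrow> t \<le> 1 \<Longrightarrow>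
             \<exists>z. f z \<le> (1 - t) * f x + t * f y \<and> g z \<le> (1 - t) * g x + t * g y"
  shows "convex {(f x + u, g x + v) | x u v. u \<ge> 0 \<and> v \<ge> 0}"
proof (rule convexI)
  fix p q :: "real \<times> real" and s t :: real
  assume "p \<in> {(f x + u, g x + v) | x u v. u \<ge> 0 \<and> v \<ge> 0}"
    and "q \<in> {(f x + u, g x + v) | x u v. u \<ge> 0 \<and> v \<ge> 0}"
    and st: "0 \<le> s" "0 \<le> t" "s + t = 1"
  then obtain x u v y u' v' where p: "p = (f x + u, g x + v)" "u \<ge> 0" "v \<ge> 0"
    and q: "q = (f y + u', g y + v')" "u' \<ge> 0" "v' \<ge> 0"
    by blast
  have "s = 1 - t"
    using st(3) by simp
  then obtain z where z: "f z \<le> s * f x + t * f y" "g z \<le> s * g x + t * g y"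
    using assms[of t x y] st by auto
  define u'' where "u'' = s * f x + t * f y - f z + s * u + t * u'"
  define v'' where "v'' = s * g x + t * g y - g z + s * v + t * v'"
  have "s *\<^sub>R p + t *\<^sub>R q = (f z + u'', g z + v'')"
    by (simp add: p q u''_def v''_def algebra_simps)
  moreover have "u'' \<ge> 0" "v'' \<ge> 0"
    using z st p q by (simp_all add: u''_def v''_def)
  ultimately show "s *\<^sub>R p + t *\<^sub>R q \<in> {(f x + u, g x + v) | x u v. u \<ge> 0 \<and> v \<ge> 0}"
    by blast
qed

definition quad :: "real \<Rightarrow> real \<Rightarrow> real \<Rightarrow> real \<Rightarrow> real" where
  "quad a b c x = a * x^2 + b * x + c"

lemma quad_reflect: "quad a (- b) c (- x) = quad a b c x"
  by (simp add: quad_def)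

lemma quad_shift: "quad a b c (x + h) = quad a (2 * a * x + b) (quad a b c x) h"
  by (simp add: quad_def algebra_simps power2_eq_square)

lemma quad_convex_combination:
  "(1 - t) * quad a b c x + t * quad a b c y
     = quad a b c ((1 - t) * x + t * y) + a * (t * (1 - t) * (x - y)^2)"
  by (simp add: quad_def algebra_simps power2_eq_square)

lemma quad_leading_elimination:
  "a1 * quad b1 b2 b3 z - b1 * quad a1 a2 a3 z = (a1 * b2 - a2 * b1) * z + (a1 * b3 - a3 * b1)"
  by (simp add: quad_def algebra_simps)

lemma quad_eventually_nonpos:
  assumes "a < 0"
  shows "eventually (\<lambda>h. quad a b c h \<le> 0) at_top"
  unfolding quad_def using assms by real_asymp

lemma quad_attains_right:
  assumes "a > 0" and "quad a b c x \<le> y"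
  shows "\<exists>h \<ge> 0. quad a b c (x + h) = y"
proof -
  have "eventually (\<lambda>h. h \<ge> 0 \<and> quad (- a) (- (2 * a * x + b)) (y - quad a b c x) h \<le> 0) at_top"
    using assms(1) by (intro eventually_conj eventually_ge_at_top quad_eventually_nonpos) simp
  then obtain H where "H \<ge> 0" and "quad (- a) (- (2 * a * x + b)) (y - quad a b c x) H \<le> 0"
    using eventually_happens'[OF trivial_limit_at_top_linorder] by blast
  then have "y \<le> quad a b c (x + H)"
    unfolding quad_shift by (simp add: quad_def algebra_simps)
  moreover have "continuous_on {0..H} (\<lambda>h. quad a b c (x + h))"
    unfolding quad_def by (intro continuous_intros)
  ultimately show ?thesis
    using IVT'[of "\<lambda>h. quad a b c (x + h)" 0 y H] assms(2) \<open>H \<ge> 0\<close> by auto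
qed

lemma concave_quad_pair_sublevels_meet_right:
  assumes "a1 \<le> 0" and "b1 < 0" and "quad a1 a2 a3 x \<le> A" and "2 * a1 * x + a2 \<le> 0"
  shows "\<exists>z. quad a1 a2 a3 z \<le> A \<and> quad b1 b2 b3 z \<le> B"
proof -
  have "eventually (\<lambda>h. h \<ge> 0 \<and> quad b1 (2 * b1 * x + b2) (quad b1 b2 b3 x - B) h \<le> 0) at_top"
    using assms(2) by (intro eventually_conj eventually_ge_at_top quad_eventually_nonpos)
  then obtain h where h: "h \<ge> 0" "quad b1 (2 * b1 * x + b2) (quad b1 b2 b3 x - B) h \<le> 0"
    using eventually_happens'[OF trivial_limit_at_top_linorder] by blast
  have "quad b1 b2 b3 (x + h) \<le> B"
    using h unfolding quad_shift by (simp add: quad_def)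
  moreover have "quad a1 a2 a3 (x + h) \<le> quad a1 a2 a3 x"
  proof -
    have "a1 * h^2 \<le> 0" "(2 * a1 * x + a2) * h \<le> 0"
      using assms(1,4) h(1) by (simp_all add: mult_nonpos_nonneg)
    then show ?thesis
      unfolding quad_shift by (simp add: quad_def)
  qed
  ultimately show ?thesis
    using assms(3) by (blast intro: order_trans)
qed

lemma concave_quad_pair_sublevels_meet:
  assumes "a1 \<le> 0" and "b1 < 0" and "quad a1 a2 a3 x \<le> A"
  shows "\<exists>z. quad a1 a2 a3 z \<le> A \<and> quad b1 b2 b3 z \<le> B"
proof (cases "2 * a1 * x + a2 \<le> 0")
  case True
  then show ?thesis
    using concave_quad_pair_sublevels_meet_right assms by blast
next
  case False
  then obtain z where "quad a1 (- a2) a3 z \<le> A" "quad b1 (- b2) b3 z \<le> B"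
    using concave_quad_pair_sublevels_meet_right[of a1 b1 "- a2" a3 "- x" A "- b2" b3 B] assms
    by (auto simp: quad_reflect)
  then show ?thesis
    by (metis quad_reflect minus_minus)
qed

lemma mixed_quad_pair_sublevels_meet_right:
  assumes "a1 > 0" and "b1 < 0" and "quad a1 a2 a3 x \<le> A"
    and "a1 * quad b1 b2 b3 x - b1 * quad a1 a2 a3 x \<le> a1 * B - b1 * A"
    and "a1 * b2 - a2 * b1 \<le> 0"
  shows "\<exists>z. quad a1 a2 a3 z \<le> A \<and> quad b1 b2 b3 z \<le> B"
proof -
  obtain h where h: "h \<ge> 0" "quad a1 a2 a3 (x + h) = A"
    using quad_attains_right assms(1,3) by blast
  have "a1 * quad b1 b2 b3 (x + h) - b1 * A
          = a1 * quad b1 b2 b3 x - b1 * quad a1 a2 a3 x + (a1 * b2 - a2 * b1) * h"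
    using h(2) quad_leading_elimination[of a1 b1 b2 b3 "x + h" a2 a3]
      quad_leading_elimination[of a1 b1 b2 b3 x a2 a3]
    by (simp add: algebra_simps)
  also have "\<dots> \<le> a1 * B - b1 * A"
    using assms(4,5) h(1) mult_nonpos_nonneg[of "a1 * b2 - a2 * b1" h] by linarith
  finally have "a1 * quad b1 b2 b3 (x + h) \<le> a1 * B"
    by simp
  then have "quad b1 b2 b3 (x + h) \<le> B"
    using assms(1) by simp
  then show ?thesis
    using h(2) by force
qed

lemma mixed_quad_pair_sublevels_meet:
  assumes "a1 > 0" and "b1 < 0" and "quad a1 a2 a3 x \<le> A"
    and "a1 * quad b1 b2 b3 x - b1 * quad a1 a2 a3 x \<le> a1 * B - b1 * A"
  shows "\<exists>z. quad a1 a2 a3 z \<le> A \<and> quad b1 b2 b3 z \<le> B"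
proof (cases "a1 * b2 - a2 * b1 \<le> 0")
  case True
  then show ?thesis
    using mixed_quad_pair_sublevels_meet_right assms by blast
next
  case False
  then obtain z where "quad a1 (- a2) a3 z \<le> A" "quad b1 (- b2) b3 z \<le> B"
    using mixed_quad_pair_sublevels_meet_right[of a1 b1 "- a2" a3 "- x" A "- b2" b3 B] assms
    by (auto simp: quad_reflect)
  then show ?thesis
    by (metis quad_reflect minus_minus)
qed

lemma quad_pair_below_convex_combination_ordered:
  assumes "0 \<le> t" and "t \<le> 1" and "b1 \<le> a1"
  shows "\<exists>z. quad a1 a2 a3 z \<le> (1 - t) * quad a1 a2 a3 x + t * quad a1 a2 a3 y
           \<and> quad b1 b2 b3 z \<le> (1 - t) * quad b1 b2 b3 x + t * quad b1 b2 b3 y"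
proof -
  define A where "A = (1 - t) * quad a1 a2 a3 x + t * quad a1 a2 a3 y"
  define B where "B = (1 - t) * quad b1 b2 b3 x + t * quad b1 b2 b3 y"
  define xt where "xt = (1 - t) * x + t * y"
  define g where "g = t * (1 - t) * (x - y)^2"
  have g: "g \<ge> 0"
    using assms by (simp add: g_def)
  have A_eq: "A = quad a1 a2 a3 xt + a1 * g" and B_eq: "B = quad b1 b2 b3 xt + b1 * g"
    by (simp_all add: A_def B_def xt_def g_def quad_convex_combination)
  consider "b1 \<ge> 0" | "b1 < 0" "a1 > 0" | "b1 < 0" "a1 \<le> 0"
    by linarith
  then have "\<exists>z. quad a1 a2 a3 z \<le> A \<and> quad b1 b2 b3 z \<le> B"
  proof cases
    case 1
    then have "quad a1 a2 a3 xt \<le> A" "quad b1 b2 b3 xt \<le> B"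
      using assms(3) g by (simp_all add: A_eq B_eq)
    then show ?thesis
      by blast
  next
    case 2
    have "quad a1 a2 a3 xt \<le> A"
      using 2(2) g by (simp add: A_eq)
    moreover have "a1 * B - b1 * A = a1 * quad b1 b2 b3 xt - b1 * quad a1 a2 a3 xt"
      by (simp add: A_eq B_eq algebra_simps)
    ultimately show ?thesis
      using mixed_quad_pair_sublevels_meet[OF 2(2,1), where x = xt and A = A and B = B] by simp
  next
    case 3
    have "quad a1 a2 a3 x \<le> A \<or> quad a1 a2 a3 y \<le> A"
      using convex_combination_ge_endpoint assms(1,2) unfolding A_def by blast
    then show ?thesis
      using concave_quad_pair_sublevels_meet[OF 3(2,1)] by blast
  qed
  then show ?thesis
    by (simp only: A_def B_def)
qed

lemma quad_pair_below_convex_combination: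
  assumes "0 \<le> t" and "t \<le> 1"
  shows "\<exists>z. quad a1 a2 a3 z \<le> (1 - t) * quad a1 a2 a3 x + t * quad a1 a2 a3 y
           \<and> quad b1 b2 b3 z \<le> (1 - t) * quad b1 b2 b3 x + t * quad b1 b2 b3 y"
proof (cases "b1 \<le> a1")
  case True
  then show ?thesis
    using quad_pair_below_convex_combination_ordered assms by blast
next
  case False
  then show ?thesis
    using quad_pair_below_convex_combination_ordered[of t a1 b1 b2 b3 x y a2 a3] assms by force
qed

theorem proposition4p2:
  fixes a1 a2 a3 b1 b2 b3 :: real
  defines "\<alpha> \<equiv> (\<lambda>x::real. a1 * x^2 + a2 * x + a3)"
      and "\<beta> \<equiv> (\<lambda>x::real. b1 * x^2 + b2 * x + b3)"
  shows "convex {(\<alpha> x + u, \<beta> x + v) | x u v. u \<ge> 0 \<and> v \<ge> 0}"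
proof -
  have "\<alpha> = quad a1 a2 a3" and "\<beta> = quad b1 b2 b3"
    by (simp_all add: \<alpha>_def \<beta>_def quad_def fun_eq_iff)
  then show ?thesis
    by (simp only:) (intro convex_image_plus_orthant quad_pair_below_convex_combination)
qed

end
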